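(* Let $\Pi$ be a ground HEX-program and $\mathbf{A}$ an interpretation. Let $\mathcal{C}$ be the partition of $A(\Pi)$ into subset-maximal strongly connected components of the graph with edge relation $\rightarrow\cup\rightarrow_e$, and for $C\in\mathcal{C}$ let $\Pi_C=\{r\in\Pi\mid H(r)\cap C\neq\emptyset\}$. If $U\neq\emptyset$ is an unfounded set of $\Pi$ with respect to $\mathbf{A}$, then for some $C\in\mathcal{C}$ the set $U\cap C$ is a nonempty unfounded set of $\Pi_C$ with respect to $\mathbf{A}$.
   Context: Ground HEX-programs. A ground ordinary atom is $p(c_1,\dots,c_\ell)$. A ground external atom is $\&g[\vec p](\vec c)$ with input list $\vec p=p_1,\dots,p_k$ (predicate names or constants) and output constants $\vec c$. A ground HEX-program is a finite set of rules $r$: $a_1\lor\dots\lor a_k\leftarrow b_1,\dots,b_m,\mathrm{not}\,b_{m+1},\dots,\mathrm{not}\,b_n$, with ordinary ground head atoms $a_i$ and each $b_j$ an ordinary or external ground atom; $H(r)=\{a_1,\dots,a_k\}$, $B^+(r)=\{b_1,\dots,b_m\}$, $B^-(r)=\{b_{m+1},\dots,b_n\}$, $B(r)$ the set of body literals. $A(\Pi)$ is the set of ordinary atoms occurring in $\Pi$. Interpretations: complete consistent sets $\mathbf{A}$ of signed literals $\mathbf{T}a$/$\mathbf{F}a$. $\mathbf{A}\models a$ (ordinary) iff $\mathbf{T}a\in\mathbf{A}$; $\mathbf{A}\models\&g[\vec p](\vec c)$ iff the Boolean oracle $f_{\&g}(\mathbf{A},\vec p,\vec c)=1$, where the oracle's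 value depends only on the extensions in $\mathbf{A}$ of the input predicates in $\vec p$; $\mathbf{A}\models\mathrm{not}\,b$ iff $\mathbf{A}\not\models b$. Unfounded sets: for a set $X$ of ordinary ground atoms appearing in $\Pi$, $\mathbf{A}\,\dot\cup\neg.\,X=(\mathbf{A}\setminus\{\mathbf{T}a\mid a\in X\})\cup\{\mathbf{F}a\mid a\in X\}$; $X$ is an unfounded set of $\Pi$ w.r.t. $\mathbf{A}$ iff for every $r\in\Pi$ with $H(r)\cap X\neq\emptyset$: (i) some literal of $B(r)$ is false w.r.t. $\mathbf{A}$, or (ii) some literal of $B(r)$ is false w.r.t. $\mathbf{A}\,\dot\cup\neg.\,X$, or (iii) some atom of $H(r)\setminus X$ is true w.r.t. $\mathbf{A}$. Dependencies: $x\rightarrow y$ iff some $r\in\Pi$ has $x\in H(r)$, $y\in B^+(r)$; $x\rightarrow_e y$ iff some $r\in\Pi$ has $x\in H(r)$ and an external atom $\&g[q_1,\dots,q_n](\vec e)\in B^+(r)\cup B^-(r)$ with some $q_i$ equal to the predicate of $y$. *)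

theory Defs
  imports Main
begin

datatype ('p, 'c) oatom = OAtom (pred: 'p) "'c list"

datatype ('p, 'c) input = PredIn 'p | ConstIn 'c

datatype ('g, 'p, 'c) batom =
    Ord "('p, 'c) oatom"
  | Ext 'g "('p, 'c) input list" "'c list"

datatype ('g, 'p, 'c) rule =
  Rule (head: "('p, 'c) oatom list") (pos: "('g, 'p, 'c) batom list") (neg: "('g, 'p, 'c) batom list")

definition H :: "('g, 'p, 'c) rule \<Rightarrow> ('p, 'c) oatom set" where
  "H r = set (head r)"

definition Bpos :: "('g, 'p, 'c) rule \<Rightarrow> ('g, 'p, 'c) batom set" where
  "Bpos r = set (pos r)"

definition Bneg :: "('g, 'p, 'c) rule \<Rightarrow> ('g, 'p, 'c) batom set" where
  "Bneg r = set (neg r)"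

definition atoms :: "('g, 'p, 'c) rule set \<Rightarrow> ('p, 'c) oatom set" where
  "atoms P = (\<Union>r\<in>P. H r \<union> {a. Ord a \<in> Bpos r \<union> Bneg r})"

text \<open>An interpretation (complete consistent set of signed literals) is represented by
  the set of ordinary atoms signed true; every other atom is signed false.\<close>

type_synonym ('p, 'c) interp = "('p, 'c) oatom set"
type_synonym ('g, 'p, 'c) extsem = "'g \<Rightarrow> ('p, 'c) interp \<Rightarrow> ('p, 'c) input list \<Rightarrow> 'c list \<Rightarrow> bool"

definition extsem_ok :: "('g, 'p, 'c) extsem \<Rightarrow> bool" where
  "extsem_ok f \<longleftrightarrow> (\<forall>g A A' ps cs.
     (\<forall>p. PredIn p \<in> set ps \<longrightarrow> (\<forall>xs. OAtom p xs \<in> A \<longleftrightarrow> OAtom p xs \<in> A'))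
     \<longrightarrow> f g A ps cs = f g A' ps cs)"

fun sat :: "('g, 'p, 'c) extsem \<Rightarrow> ('p, 'c) interp \<Rightarrow> ('g, 'p, 'c) batom \<Rightarrow> bool" where
  "sat f A (Ord a) \<longleftrightarrow> a \<in> A"
| "sat f A (Ext g ps cs) \<longleftrightarrow> f g A ps cs"

definition body_false :: "('g, 'p, 'c) extsem \<Rightarrow> ('p, 'c) interp \<Rightarrow> ('g, 'p, 'c) rule \<Rightarrow> bool" where
  "body_false f A r \<longleftrightarrow> (\<exists>b\<in>Bpos r. \<not> sat f A b) \<or> (\<exists>b\<in>Bneg r. sat f A b)"

definition falsify :: "('p, 'c) interp \<Rightarrow> ('p, 'c) oatom set \<Rightarrow> ('p, 'c) interp" where
  "falsify A X = A - X"

definition unfounded :: "('g, 'p, 'c) extsem \<Rightarrow> ('g, 'p, 'c) rule set \<Rightarrow> ('p, 'c) interp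
     \<Rightarrow> ('p, 'c) oatom set \<Rightarrow> bool" where
  "unfounded f P A X \<longleftrightarrow>
     (\<forall>r\<in>P. H r \<inter> X \<noteq> {} \<longrightarrow>
        body_false f A r \<or> body_false f (falsify A X) r \<or> (\<exists>a\<in>H r - X. a \<in> A))"

definition dep :: "('g, 'p, 'c) rule set \<Rightarrow> (('p, 'c) oatom \<times> ('p, 'c) oatom) set" where
  "dep P = {(x, y). \<exists>r\<in>P. x \<in> H r \<and> Ord y \<in> Bpos r}"

definition dep_e :: "('g, 'p, 'c) rule set \<Rightarrow> (('p, 'c) oatom \<times> ('p, 'c) oatom) set" where
  "dep_e P = {(x, y). \<exists>r\<in>P. x \<in> H r \<and>
      (\<exists>g ps cs. Ext g ps cs \<in> Bpos r \<union> Bneg r \<and> PredIn (pred y) \<in> set ps)}"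

definition dep_graph :: "('g, 'p, 'c) rule set \<Rightarrow> (('p, 'c) oatom \<times> ('p, 'c) oatom) set" where
  "dep_graph P = (dep P \<union> dep_e P) \<inter> (atoms P \<times> atoms P)"

definition strongly_connected :: "('g, 'p, 'c) rule set \<Rightarrow> ('p, 'c) oatom set \<Rightarrow> bool" where
  "strongly_connected P S \<longleftrightarrow> S \<noteq> {} \<and> S \<subseteq> atoms P \<and>
     (\<forall>x\<in>S. \<forall>y\<in>S. (x, y) \<in> (dep_graph P)\<^sup>*)"

definition sccs :: "('g, 'p, 'c) rule set \<Rightarrow> ('p, 'c) oatom set set" where
  "sccs P = {C. strongly_connected P C \<and> (\<forall>C'. strongly_connected P C' \<and> C \<subseteq> C' \<longrightarrow> C' = C)}"

definition comp_prog :: "('g, 'p, 'c) rule set \<Rightarrow> ('p, 'c) oatom set \<Rightarrow> ('g, 'p, 'c) rule set" where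
  "comp_prog P C = {r\<in>P. H r \<inter> C \<noteq> {}}"

end

theory Submission
  imports Defs
begin

text \<open>Choose x \<in> U whose set of atoms of U reachable in the dependency graph is
  minimal. Every atom of U reachable from x then reaches x back, so the component C
  of x is closed within U: an atom of U on which a rule with head in U \<inter> C depends
  lies in C. Hence falsifying only U \<inter> C instead of U changes none of the body
  literals of these rules (external atoms see only their input predicates), and
  unfoundedness of U passes to U \<inter> C in \<Pi>_C.\<close>

lemma finite_atoms: "finite P \<Longrightarrow> finite (atoms P)"
  unfolding atoms_def
proof (rule finite_UN_I)
  fix r :: "('g, 'p, 'c) rule"
  have "{a. Ord a \<in> Bpos r \<union> Bneg r} = Ord -` (set (pos r) \<union> set (neg r))"
    by (auto simp: Bpos_def Bneg_def)
  moreover have "finite (Ord -` (set (pos r) \<union> set (neg r)) :: ('p, 'c) oatom set)"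
    by (rule finite_vimageI) (auto simp: inj_def)
  ultimately show "finite (H r \<union> {a. Ord a \<in> Bpos r \<union> Bneg r})"
    by (simp add: H_def)
qed

lemma finite_obtains_reach_closed:
  assumes "finite U" and "U \<noteq> {}"
  obtains x where "x \<in> U" and "\<And>y. y \<in> U \<Longrightarrow> (x, y) \<in> R\<^sup>* \<Longrightarrow> (y, x) \<in> R\<^sup>*"
proof -
  define reach where "reach x = {y \<in> U. (x, y) \<in> R\<^sup>*}" for x
  obtain x where "x \<in> U" and x_min: "\<And>y. y \<in> U \<Longrightarrow> card (reach x) \<le> card (reach y)"
    using ex_has_least_nat[of "\<lambda>x. x \<in> U" _ "\<lambda>x. card (reach x)"] assms(2) by blast
  have "(y, x) \<in> R\<^sup>*" if "y \<in> U" and "(x, y) \<in> R\<^sup>*" for y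
  proof -
    have "reach y \<subseteq> reach x"
      using that(2) by (auto simp: reach_def intro: rtrancl_trans)
    moreover have "finite (reach x)"
      using assms(1) by (simp add: reach_def)
    ultimately have "reach y = reach x"
      using x_min[OF that(1)] by (meson card_seteq)
    moreover have "x \<in> reach x"
      using \<open>x \<in> U\<close> by (simp add: reach_def)
    ultimately show ?thesis by (auto simp: reach_def)
  qed
  with \<open>x \<in> U\<close> show thesis by (rule that)
qed

definition scc_of :: "('g, 'p, 'c) rule set \<Rightarrow> ('p, 'c) oatom \<Rightarrow> ('p, 'c) oatom set" where
  "scc_of P x = {z \<in> atoms P. (x, z) \<in> (dep_graph P)\<^sup>* \<and> (z, x) \<in> (dep_graph P)\<^sup>*}"

lemma mem_scc_of_self: "x \<in> atoms P \<Longrightarrow> x \<in> scc_of P x"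
  by (simp add: scc_of_def)

lemma scc_of_in_sccs:
  assumes "x \<in> atoms P"
  shows "scc_of P x \<in> sccs P"
proof -
  have sc: "strongly_connected P (scc_of P x)"
    unfolding strongly_connected_def
    using mem_scc_of_self[OF assms] by (auto simp: scc_of_def intro: rtrancl_trans)
  have "C' \<subseteq> scc_of P x" if "strongly_connected P C'" and "scc_of P x \<subseteq> C'" for C'
    using that mem_scc_of_self[OF assms]
    unfolding strongly_connected_def scc_of_def by blast
  with sc show ?thesis
    unfolding sccs_def by blast
qed

lemma scc_of_dep_closed:
  assumes reach_back: "\<And>y. y \<in> U \<Longrightarrow> (x, y) \<in> (dep_graph P)\<^sup>* \<Longrightarrow> (y, x) \<in> (dep_graph P)\<^sup>*"
    and "U \<subseteq> atoms P"
    and "h \<in> scc_of P x" and "y \<in> U" and "(h, y) \<in> dep_graph P"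
  shows "y \<in> scc_of P x"
proof -
  have "(x, h) \<in> (dep_graph P)\<^sup>*"
    using \<open>h \<in> scc_of P x\<close> by (simp add: scc_of_def)
  then have "(x, y) \<in> (dep_graph P)\<^sup>*"
    using \<open>(h, y) \<in> dep_graph P\<close> by (rule rtrancl_into_rtrancl)
  with reach_back \<open>y \<in> U\<close> \<open>U \<subseteq> atoms P\<close> show ?thesis
    by (auto simp: scc_of_def)
qed

lemma sat_Ext_falsify_cong:
  assumes "extsem_ok f"
    and "\<And>y. PredIn (pred y) \<in> set ps \<Longrightarrow> y \<in> X \<longleftrightarrow> y \<in> Y"
  shows "sat f (falsify A X) (Ext g ps cs) = sat f (falsify A Y) (Ext g ps cs)"
proof -
  have "\<forall>p. PredIn p \<in> set ps \<longrightarrow>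
      (\<forall>xs. OAtom p xs \<in> A - X \<longleftrightarrow> OAtom p xs \<in> A - Y)"
    using assms(2)[of "OAtom _ _"] by auto
  then show ?thesis
    using assms(1) unfolding extsem_ok_def falsify_def by simp
qed

lemma body_false_falsify_subset:
  assumes "extsem_ok f" and "Y \<subseteq> X"
    and ord: "\<And>y. Ord y \<in> Bpos r \<Longrightarrow> y \<in> X \<Longrightarrow> y \<in> Y"
    and ext: "\<And>g ps cs y. Ext g ps cs \<in> Bpos r \<union> Bneg r \<Longrightarrow> PredIn (pred y) \<in> set ps
                \<Longrightarrow> y \<in> X \<Longrightarrow> y \<in> Y"
    and "body_false f (falsify A X) r"
  shows "body_false f (falsify A Y) r"
proof -
  have ext_eq: "sat f (falsify A X) (Ext g ps cs) = sat f (falsify A Y) (Ext g ps cs)"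
    if "Ext g ps cs \<in> Bpos r \<union> Bneg r" for g ps cs
  proof (rule sat_Ext_falsify_cong[OF assms(1)])
    show "y \<in> X \<longleftrightarrow> y \<in> Y" if "PredIn (pred y) \<in> set ps" for y
      using ext[OF \<open>Ext g ps cs \<in> Bpos r \<union> Bneg r\<close> that] \<open>Y \<subseteq> X\<close> by blast
  qed
  have pos: "\<not> sat f (falsify A Y) b" if "b \<in> Bpos r" and "\<not> sat f (falsify A X) b" for b
  proof (cases b)
    case (Ord y)
    then show ?thesis
      using that ord[of y] by (auto simp: falsify_def)
  next
    case (Ext g ps cs)
    then show ?thesis
      using that ext_eq[of g ps cs] by simp
  qed
  have neg: "sat f (falsify A Y) b" if "b \<in> Bneg r" and "sat f (falsify A X) b" for b
  proof (cases b)
    case (Ord y)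
    then show ?thesis
      using that \<open>Y \<subseteq> X\<close> by (auto simp: falsify_def)
  next
    case (Ext g ps cs)
    then show ?thesis
      using that ext_eq[of g ps cs] by simp
  qed
  show ?thesis
    using assms(5) pos neg unfolding body_false_def by blast
qed

lemma unfounded_restrict_dep_closed:
  assumes "extsem_ok f" and "unfounded f P A U" and "U \<subseteq> atoms P" and "P' \<subseteq> P"
    and closed: "\<And>h y. h \<in> U \<inter> C \<Longrightarrow> y \<in> U \<Longrightarrow> (h, y) \<in> dep_graph P \<Longrightarrow> y \<in> C"
  shows "unfounded f P' A (U \<inter> C)"
  unfolding unfounded_def
proof (intro ballI impI)
  fix r assume "r \<in> P'" and "H r \<inter> (U \<inter> C) \<noteq> {}"
  then obtain h where "r \<in> P" "h \<in> H r" "h \<in> U \<inter> C"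
    using \<open>P' \<subseteq> P\<close> by blast
  have succ: "y \<in> C" if "y \<in> U" and "(h, y) \<in> dep P \<union> dep_e P" for y
  proof -
    have "h \<in> atoms P"
      using \<open>r \<in> P\<close> \<open>h \<in> H r\<close> by (auto simp: atoms_def)
    with that assms(3) have "(h, y) \<in> dep_graph P"
      by (auto simp: dep_graph_def)
    with closed \<open>h \<in> U \<inter> C\<close> \<open>y \<in> U\<close> show ?thesis by blast
  qed
  have "body_false f A r \<or> body_false f (falsify A U) r \<or> (\<exists>a\<in>H r - U. a \<in> A)"
    using assms(2) \<open>r \<in> P\<close> \<open>h \<in> H r\<close> \<open>h \<in> U \<inter> C\<close> unfolding unfounded_def by blast
  moreover have "body_false f (falsify A U) r \<Longrightarrow> body_false f (falsify A (U \<inter> C)) r"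
  proof (rule body_false_falsify_subset[OF assms(1)])
    show "y \<in> U \<inter> C" if "Ord y \<in> Bpos r" and "y \<in> U" for y
      using that succ \<open>r \<in> P\<close> \<open>h \<in> H r\<close> by (auto simp: dep_def)
    show "y \<in> U \<inter> C"
      if "Ext g ps cs \<in> Bpos r \<union> Bneg r" and "PredIn (pred y) \<in> set ps" and "y \<in> U"
      for g ps cs y
      using that succ[of y] \<open>r \<in> P\<close> \<open>h \<in> H r\<close> unfolding dep_e_def by blast
  qed auto
  ultimately show "body_false f A r \<or> body_false f (falsify A (U \<inter> C)) r
      \<or> (\<exists>a\<in>H r - U \<inter> C. a \<in> A)"
    by blast
qed

lemma comp_prog_subset: "comp_prog P C \<subseteq> P"
  by (auto simp: comp_prog_def)

theorem proposition3:
  fixes P :: "('g, 'p, 'c) rule set" and f :: "('g, 'p, 'c) extsem"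
    and A :: "('p, 'c) interp" and U :: "('p, 'c) oatom set"
  assumes "finite P"
    and "extsem_ok f"
    and "U \<noteq> {}"
    and "U \<subseteq> atoms P"
    and "unfounded f P A U"
  shows "\<exists>C\<in>sccs P. U \<inter> C \<noteq> {} \<and> unfounded f (comp_prog P C) A (U \<inter> C)"
proof -
  have "finite U"
    using finite_atoms[OF assms(1)] assms(4) by (rule finite_subset[rotated])
  then obtain x where "x \<in> U"
    and reach_back: "\<And>y. y \<in> U \<Longrightarrow> (x, y) \<in> (dep_graph P)\<^sup>* \<Longrightarrow> (y, x) \<in> (dep_graph P)\<^sup>*"
    using assms(3) by (rule finite_obtains_reach_closed[where R = "dep_graph P"]) blast
  define C where "C = scc_of P x"
  have "x \<in> atoms P"
    using \<open>x \<in> U\<close> assms(4) by blast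
  have "\<And>h y. h \<in> U \<inter> C \<Longrightarrow> y \<in> U \<Longrightarrow> (h, y) \<in> dep_graph P \<Longrightarrow> y \<in> C"
    unfolding C_def using scc_of_dep_closed[OF reach_back assms(4)] by blast
  then have "unfounded f (comp_prog P C) A (U \<inter> C)"
    by (rule unfounded_restrict_dep_closed[OF assms(2,5,4) comp_prog_subset])
  moreover have "C \<in> sccs P" and "x \<in> U \<inter> C"
    using scc_of_in_sccs[OF \<open>x \<in> atoms P\<close>] mem_scc_of_self[OF \<open>x \<in> atoms P\<close>] \<open>x \<in> U\<close>
    by (simp_all add: C_def)
  ultimately show ?thesis by blast
qed

end
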